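(* Let $q=p^\ell$ be a prime power with $p$ prime, let $n,d,k$ be positive integers, and write $d+1=s\cdot(q-q/p)+r$ with integers $s\ge0$ and $0\leq r<q-q/p$. If $h:\mathbb{F}_q^k\to\mathbb{F}_q$ satisfies (i) $\deg(h)\leq(q-1)k-(d+1)$, and (ii) for every integer $r'$ with $r\leq r'\leq q-1$, $h$ contains the monomial $\left(\prod_{i=1}^{s}x_i^{q/p-1}\right)x_{s+1}^{q-1-r'}\left(\prod_{j=s+2}^{k}x_j^{q-1}\right)$, then $\mathrm{RM}[n,q,d]=\mathcal{F}_n(h)$.
   Context: Functions $\mathbb{F}_q^m\to\mathbb{F}_q$ are identified with their unique polynomial representations $\sum_{e\in\{0,\dots,q-1\}^m}C_ex^e$; $h$ "contains" $x^e$ if $C_e\ne0$; the degree is the maximal $|e|_1$ with $C_e\neq0$. $\mathrm{RM}[n,q,d]$ is the set of functions $\mathbb{F}_q^n\to\mathbb{F}_q$ of degree at most $d$. For $f,g:\mathbb{F}_q^k\to\mathbb{F}_q$, $\langle f,g\rangle=\sum_{\alpha\in\mathbb{F}_q^k}f(\alpha)g(\alpha)$. Let $\mathcal{T}_{n,k}$ be the set of affine maps $T:\mathbb{F}_q^k\to\mathbb{F}_q^n$, and $f\circ T(x)=f(T(x))$ for $x\in\mathbb{F}_q^k$. For $h:\mathbb{F}_q^k\to\mathbb{F}_q$, $\mathcal{F}_n(h)=\{f:\mathbb{F}_q^n\to\mathbb{F}_q : \langle f\circ T,h\rangle=0\ \forall T\in\mathcal{T}_{n,k}\}$. *)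

theory Defs
  imports Main "HOL-Library.FuncSet" "HOL-Library.Cardinality" "HOL-Computational_Algebra.Primes"
begin

text \<open>Vectors of F_q^m are modelled as functions nat => 'a that vanish outside {0..<m}.\<close>
definition vecs :: "nat \<Rightarrow> (nat \<Rightarrow> 'a::field) set" where
  "vecs m = {x. \<forall>i\<ge>m. x i = 0}"

definition funs :: "nat \<Rightarrow> ((nat \<Rightarrow> 'a::field) \<Rightarrow> 'a) set" where
  "funs m = vecs m \<rightarrow>\<^sub>E UNIV"

definition exps :: "'a::{field,finite} itself \<Rightarrow> nat \<Rightarrow> (nat \<Rightarrow> nat) set" where
  "exps (TYPE('a)) m = {e. (\<forall>i<m. e i \<le> CARD('a) - 1) \<and> (\<forall>i\<ge>m. e i = 0)}"

definition mono :: "nat \<Rightarrow> (nat \<Rightarrow> nat) \<Rightarrow> (nat \<Rightarrow> 'a::field) \<Rightarrow> 'a" where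
  "mono m e x = (\<Prod>i<m. x i ^ e i)"

definition coeffs :: "nat \<Rightarrow> ((nat \<Rightarrow> 'a::{field,finite}) \<Rightarrow> 'a) \<Rightarrow> (nat \<Rightarrow> nat) \<Rightarrow> 'a" where
  "coeffs m h = (THE C. (\<forall>e. e \<notin> exps TYPE('a) m \<longrightarrow> C e = 0) \<and>
      (\<forall>x\<in>vecs m. h x = (\<Sum>e\<in>exps TYPE('a) m. C e * mono m e x)))"

definition contains :: "nat \<Rightarrow> ((nat \<Rightarrow> 'a::{field,finite}) \<Rightarrow> 'a) \<Rightarrow> (nat \<Rightarrow> nat) \<Rightarrow> bool" where
  "contains m h e \<longleftrightarrow> coeffs m h e \<noteq> 0"

text \<open>Degree: maximal |e|_1 with C_e nonzero (the zero function gets degree 0 by convention).\<close>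
definition deg :: "nat \<Rightarrow> ((nat \<Rightarrow> 'a::{field,finite}) \<Rightarrow> 'a) \<Rightarrow> nat" where
  "deg m h = Max (insert 0 {(\<Sum>i<m. e i) | e. e \<in> exps TYPE('a) m \<and> coeffs m h e \<noteq> 0})"

definition RM :: "nat \<Rightarrow> nat \<Rightarrow> ((nat \<Rightarrow> 'a::{field,finite}) \<Rightarrow> 'a) set" where
  "RM n d = {f \<in> funs n. deg n f \<le> d}"

definition inner :: "nat \<Rightarrow> ((nat \<Rightarrow> 'a::{field,finite}) \<Rightarrow> 'a) \<Rightarrow> ((nat \<Rightarrow> 'a) \<Rightarrow> 'a) \<Rightarrow> 'a" where
  "inner k f g = (\<Sum>\<alpha>\<in>vecs k. f \<alpha> * g \<alpha>)"

definition affine :: "nat \<Rightarrow> nat \<Rightarrow> (nat \<Rightarrow> nat \<Rightarrow> 'a::field) \<Rightarrow> (nat \<Rightarrow> 'a) \<Rightarrow> (nat \<Rightarrow> 'a) \<Rightarrow> (nat \<Rightarrow> 'a)" where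
  "affine n k A b x = (\<lambda>i. if i < n then (\<Sum>j<k. A i j * x j) + b i else 0)"

definition affine_maps :: "nat \<Rightarrow> nat \<Rightarrow> ((nat \<Rightarrow> 'a::field) \<Rightarrow> (nat \<Rightarrow> 'a)) set" where
  "affine_maps n k = {affine n k A b | A b. True}"

definition Fam :: "nat \<Rightarrow> nat \<Rightarrow> ((nat \<Rightarrow> 'a::{field,finite}) \<Rightarrow> 'a) \<Rightarrow> ((nat \<Rightarrow> 'a) \<Rightarrow> 'a) set" where
  "Fam n k h = {f \<in> funs n. \<forall>T\<in>affine_maps n k. inner k (f \<circ> T) h = 0}"

end

(*
  RM[n,q,d] is contained in F_n(h): for deg f <= d and an affine map T, the product (f o T) h is
  a polynomial of degree < (q-1)k on F_q^k, and every such polynomial sums to zero over F_q^k.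

  Conversely, F_n(h) is closed under linear combinations and affine substitutions. If f in F_n(h)
  has a monomial x^e of degree > d, averaging f over coordinate scalings isolates x^e in F_n(h).
  Averaging over the shears x_j -> l x_j + x_i then moves onto e_i any part u of e_j whose base-p
  digits lie below those of e_j, because (e_j choose u) is nonzero mod p by Lucas' theorem.
  Moving the mass of e into s + 1 fresh variables this way produces the monomial
  x_1^(q-q/p) ... x_s^(q-q/p) x_(s+1)^v with r <= v < r + q/p. Its inner product with h over F_q^k
  must vanish, but up to sign it is the coefficient of h at the complementary monomial, which is
  nonzero by hypothesis (ii).
*)
theory Submission
  imports Defs "HOL-Computational_Algebra.Polynomial"
begin

hide_const (open) Polynomial.coeffs

section \<open>Finite fields\<close>

lemma card_field_ge_2: "2 \<le> CARD('a::{field,finite})"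
proof -
  have "card {0::'a, 1} = 2" by simp
  moreover have "card {0::'a, 1} \<le> CARD('a)" by (rule card_mono) auto
  ultimately show ?thesis by simp
qed

lemma of_nat_card_field: "of_nat CARD('a) = (0::'a::{field,finite})"
proof -
  have "(\<Sum>x\<in>(UNIV::'a set). x + 1) = (\<Sum>x\<in>UNIV. x)"
    by (rule sum.reindex_bij_witness[of _ "\<lambda>x. x - 1" "\<lambda>x. x + 1"]) auto
  then show ?thesis by (simp add: sum.distrib)
qed

lemma power_card_minus_1_field:
  fixes x :: "'a::{field,finite}"
  assumes "x \<noteq> 0"
  shows "x ^ (CARD('a) - 1) = 1"
proof -
  have "x ^ (CARD('a) - 1) * (\<Prod>y\<in>UNIV-{0::'a}. y) = (\<Prod>y\<in>UNIV-{0}. x * y)"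
    by (simp add: prod.distrib card_Diff_singleton)
  also have "\<dots> = (\<Prod>y\<in>UNIV-{0}. y)"
    by (rule prod.reindex_bij_witness[of _ "\<lambda>y. y / x" "\<lambda>y. x * y"]) (use assms in auto)
  finally show ?thesis by simp
qed

lemma power_card_field: "(x::'a::{field,finite}) ^ CARD('a) = x"
proof (cases "x = 0")
  case False
  have "CARD('a) = Suc (CARD('a) - 1)" using card_field_ge_2[where 'a='a] by simp
  then have "x ^ CARD('a) = x * x ^ (CARD('a) - 1)" by (metis power_Suc)
  then show ?thesis using power_card_minus_1_field[OF False] by simp
qed simp

lemma exists_power_neq_1_field:
  assumes "0 < m" "m < CARD('a::{field,finite}) - 1"
  shows "\<exists>c::'a. c \<noteq> 0 \<and> c ^ m \<noteq> 1"
proof (rule ccontr)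
  assume "\<not> ?thesis"
  then have roots: "UNIV - {0} \<subseteq> {x::'a. poly (monom 1 m - 1) x = 0}"
    by (auto simp: poly_monom)
  have "poly (monom (1::'a) m - 1) 0 \<noteq> 0"
    using assms by (simp add: poly_monom power_0_left)
  then have "monom (1::'a) m - 1 \<noteq> 0" by auto
  moreover have "degree (monom (1::'a) m - 1) \<le> m"
    by (metis degree_diff_le degree_monom_le degree_1 le0 le_trans)
  ultimately have "card {x::'a. poly (monom 1 m - 1) x = 0} \<le> m"
    using card_poly_roots_bound le_trans by blast
  moreover have "card (UNIV - {0::'a}) \<le> card {x::'a. poly (monom 1 m - 1) x = 0}"
    using roots by (intro card_mono) simp_all
  ultimately show False using assms by (simp add: card_Diff_singleton)
qed

lemma sum_power_field:
  "(\<Sum>x\<in>(UNIV::'a::{field,finite} set). x ^ m) =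
     (if 0 < m \<and> (CARD('a) - 1) dvd m then -1 else 0)"
proof (cases "0 < m \<and> (CARD('a) - 1) dvd m")
  case True
  then obtain t where m: "m = (CARD('a) - 1) * t" by blast
  have "(\<Sum>x\<in>(UNIV::'a set). x ^ m) = (\<Sum>x\<in>UNIV - {0}. x ^ m)"
    using True by (intro sum.mono_neutral_right) auto
  also have "\<dots> = (\<Sum>x\<in>UNIV - {0::'a}. 1)"
    by (intro sum.cong) (simp_all add: m power_mult power_card_minus_1_field[simplified])
  also have "\<dots> = of_nat CARD('a) - 1"
    using card_field_ge_2[where 'a='a] by (simp add: card_Diff_singleton of_nat_diff)
  finally show ?thesis using True by (simp add: of_nat_card_field)
next
  case False
  show ?thesis
  proof (cases "m = 0")
    case True
    then show ?thesis by (simp add: of_nat_card_field)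
  next
    case m0: False
    define m' where "m' = m mod (CARD('a) - 1)"
    have "0 < m'" "m' < CARD('a) - 1"
      using False m0 card_field_ge_2[where 'a='a] unfolding m'_def by (auto intro: gr0I dest: mod_0_imp_dvd)
    then obtain c :: 'a where c: "c \<noteq> 0" "c ^ m' \<noteq> 1"
      using exists_power_neq_1_field by blast
    have "c ^ m = (c ^ (CARD('a) - 1)) ^ (m div (CARD('a) - 1)) * c ^ m'"
      unfolding m'_def power_mult[symmetric] power_add[symmetric] by simp
    then have cm: "c ^ m \<noteq> 1" using c by (simp add: power_card_minus_1_field[simplified])
    have "c ^ m * (\<Sum>x\<in>UNIV. x ^ m) = (\<Sum>x\<in>UNIV. (c * x) ^ m)"
      by (simp add: power_mult_distrib sum_distrib_left)
    also have "\<dots> = (\<Sum>x\<in>(UNIV::'a set). x ^ m)"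
      by (rule sum.reindex_bij_witness[of _ "\<lambda>y. y / c" "\<lambda>y. c * y"]) (use c in auto)
    finally have "(c ^ m - 1) * (\<Sum>x\<in>(UNIV::'a set). x ^ m) = 0"
      by (simp add: algebra_simps)
    then show ?thesis using cm False by simp
  qed
qed

lemma CHAR_eq_prime_of_card:
  assumes "prime p" "CARD('a::{field,finite}) = p ^ l"
  shows "CHAR('a) = p"
proof -
  have "CHAR('a) dvd p ^ l"
    using of_nat_card_field[where 'a='a] assms(2) by (metis of_nat_eq_0_iff_char_dvd)
  moreover have "prime CHAR('a)"
    by (intro prime_CHAR_semidom finite_imp_CHAR_pos) simp
  ultimately show ?thesis
    using assms(1) prime_dvd_power primes_dvd_imp_eq by blast
qed

section \<open>Digitwise domination in base \<open>p\<close> and Lucas' theorem\<close>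

definition digits_le :: "nat \<Rightarrow> nat \<Rightarrow> nat \<Rightarrow> bool" where
  "digits_le p u c \<longleftrightarrow> (\<forall>t. u div p ^ t mod p \<le> c div p ^ t mod p)"

lemma digits_le_iff:
  assumes "p > 0"
  shows "digits_le p u c \<longleftrightarrow> u mod p \<le> c mod p \<and> digits_le p (u div p) (c div p)"
proof -
  have shift: "x div (p * p ^ t) = x div p div p ^ t" for x t
    by (simp add: div_mult2_eq)
  show ?thesis unfolding digits_le_def
  proof safe
    fix t
    assume "\<forall>t. u div p ^ t mod p \<le> c div p ^ t mod p"
    from this[rule_format, of 0] this[rule_format, of "Suc t"]
    show "u mod p \<le> c mod p" "u div p div p ^ t mod p \<le> c div p div p ^ t mod p"
      by (simp_all add: shift)
  next
    fix t
    assume "u mod p \<le> c mod p" "\<forall>t. u div p div p ^ t mod p \<le> c div p div p ^ t mod p"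
    then show "u div p ^ t mod p \<le> c div p ^ t mod p"
      by (cases t) (simp_all add: shift)
  qed
qed

lemma digits_le_refl [simp]: "digits_le p c c"
  unfolding digits_le_def by simp

lemma digits_le_0_left [simp]: "digits_le p 0 c"
  unfolding digits_le_def by simp

lemma digits_le_imp_le:
  assumes "p > 1" "digits_le p u c"
  shows "u \<le> c"
  using assms(2)
proof (induction u arbitrary: c rule: less_induct)
  case (less u)
  show ?case
  proof (cases "u = 0")
    case False
    have digits: "u mod p \<le> c mod p" "digits_le p (u div p) (c div p)"
      using digits_le_iff[of p u c] less.prems assms(1) by auto
    have "u div p < u" using False assms(1) by simp
    then have "u div p \<le> c div p" using less.IH digits(2) by blast
    then have "p * (u div p) + u mod p \<le> p * (c div p) + c mod p"
      using digits(1) by (meson add_mono mult_le_mono2)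
    then show ?thesis by simp
  qed simp
qed

lemma coeff_monom_1_1_plus_1_power:
  "coeff ((monom (1::'a::comm_semiring_1) 1 + 1) ^ n) i = of_nat (n choose i)"
proof -
  have "(monom (1::'a) 1 + 1) ^ n = (\<Sum>k\<le>n. monom (of_nat (n choose k)) k)"
    by (simp add: binomial_ring monom_power of_nat_poly smult_monom)
  then show ?thesis by (simp add: coeff_sum coeff_monom binomial_eq_0)
qed

lemma of_nat_binomial_lucas_step:
  assumes "prime p" "CHAR('a::comm_semiring_1) = p" "c0 < p" "u0 < p"
  shows "(of_nat ((p * c1 + c0) choose (p * u1 + u0)) :: 'a)
           = of_nat (c1 choose u1) * of_nat (c0 choose u0)"
proof -
  define X :: "'a poly" where "X = monom 1 1"
  define N where "N = p * u1 + u0"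
  have coeff_X_plus_1_power: "coeff ((X + 1) ^ n) i = of_nat (n choose i)" for n i
    unfolding X_def by (rule coeff_monom_1_1_plus_1_power)
  have "prime CHAR('a poly)" using assms by simp
  from freshmans_dream[OF this, of p X 1] have "(X + 1) ^ p = monom 1 p + 1"
    using assms(2) by (simp add: X_def monom_power)
  then have "(X + 1) ^ (p * c1 + c0) = (monom 1 p + 1) ^ c1 * (X + 1) ^ c0"
    by (simp add: power_add power_mult)
  also have "(monom (1::'a) p + 1) ^ c1 = (\<Sum>i\<le>c1. monom (of_nat (c1 choose i)) (p * i))"
    by (simp add: binomial_ring monom_power of_nat_poly smult_monom mult.commute)
  finally have "coeff ((X + 1) ^ (p * c1 + c0)) N =
      (\<Sum>i\<le>c1. if N < p * i then 0 else of_nat (c1 choose i) * coeff ((X + 1) ^ c0) (N - p * i))"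
    by (simp add: sum_distrib_right coeff_sum coeff_monom_mult)
  also have "\<dots> = (\<Sum>i\<le>c1. if i = u1 then of_nat (c1 choose u1) * of_nat (c0 choose u0) else 0)"
  proof (intro sum.cong refl)
    fix i
    consider "i < u1" | "i = u1" | "u1 < i" by linarith
    then show "(if N < p * i then 0 else of_nat (c1 choose i) * coeff ((X + 1) ^ c0) (N - p * i)) =
          (if i = u1 then of_nat (c1 choose u1) * of_nat (c0 choose u0) else (0::'a))"
    proof cases
      case 1
      then have "p * i + p \<le> p * u1" using mult_le_mono2[of "Suc i" u1 p] by simp
      then have "c0 < N - p * i" using assms(3) unfolding N_def by linarith
      then show ?thesis using 1 by (simp add: coeff_X_plus_1_power binomial_eq_0)
    next
      case 3
      then have "p * u1 + p \<le> p * i" using mult_le_mono2[of "Suc u1" i p] by simp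
      then show ?thesis using 3 assms(4) unfolding N_def by auto
    qed (simp add: N_def coeff_X_plus_1_power)
  qed
  also have "\<dots> = of_nat (c1 choose u1) * of_nat (c0 choose u0)"
    by (simp add: binomial_eq_0)
  finally show ?thesis by (simp add: N_def coeff_X_plus_1_power)
qed

lemma of_nat_binomial_neq_0_if_digits_le:
  assumes "prime p" "CHAR('a::idom) = p" "digits_le p u c"
  shows "(of_nat (c choose u) :: 'a) \<noteq> 0"
  using assms(3)
proof (induction u arbitrary: c rule: less_induct)
  case (less u)
  have p1: "p > 1" using assms(1) prime_gt_1_nat by blast
  show ?case
  proof (cases "u = 0")
    case False
    have digits: "u mod p \<le> c mod p" "digits_le p (u div p) (c div p)"
      using digits_le_iff[of p u c] less.prems p1 by auto
    have "u div p < u" using False p1 by simp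
    then have high: "(of_nat (c div p choose u div p) :: 'a) \<noteq> 0"
      using less.IH digits(2) by blast
    have "c mod p < p" using p1 by simp
    then have "\<not> p dvd fact (c mod p)"
      using prime_dvd_fact_iff[OF assms(1)] by simp
    then have "\<not> p dvd (c mod p choose u mod p)"
      using binomial_fact_lemma[OF digits(1)] by (metis dvd_mult)
    then have low: "(of_nat (c mod p choose u mod p) :: 'a) \<noteq> 0"
      using assms(2) by (simp add: of_nat_eq_0_iff_char_dvd)
    have "(of_nat (c choose u) :: 'a)
        = of_nat ((p * (c div p) + c mod p) choose (p * (u div p) + u mod p))"
      by simp
    also have "\<dots> = of_nat (c div p choose u div p) * of_nat (c mod p choose u mod p)"
      using assms p1 by (intro of_nat_binomial_lucas_step) auto
    finally show ?thesis using high low by simp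
  qed simp
qed

lemma digits_le_if_high_digits_eq:
  assumes "p > 1" "p * (c div p) < w" "w \<le> c"
  shows "digits_le p w c"
proof -
  have "c < p * (c div p) + p"
    using mult_div_mod_eq[of p c] mod_less_divisor[of p c] assms(1) by linarith
  then have "w div p = c div p"
    using assms(2,3) by (intro div_nat_eqI) auto
  moreover have "w mod p \<le> c mod p"
    using assms(3) calculation by (metis add_le_cancel_left div_mult_mod_eq)
  ultimately show ?thesis using digits_le_iff[of p w c] assms(1) by simp
qed

lemma digits_le_in_window:
  assumes "p > 1"
  shows "c < p ^ Suc j \<Longrightarrow> 0 < w \<Longrightarrow> w \<le> c \<Longrightarrow> \<exists>u. digits_le p u c \<and> w \<le> u \<and> u < w + p ^ j"
proof (induction j arbitrary: c w)
  case 0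
  then have "digits_le p w c"
    using digits_le_if_high_digits_eq[OF assms] by simp
  then show ?case by auto
next
  case (Suc j)
  show ?case
  proof (cases "p * (c div p) < w")
    case True
    then have "digits_le p w c"
      using digits_le_if_high_digits_eq[OF assms] Suc.prems by simp
    then show ?thesis using assms by (intro exI[of _ w]) auto
  next
    case False
    \<comment> \<open>round \<open>w\<close> up to a multiple of \<open>p\<close> and recurse on the higher digits\<close>
    define w1 where "w1 = (w + p - 1) div p"
    have w1_bounds: "w \<le> p * w1" "p * w1 \<le> w + p - 1"
      using mult_div_mod_eq[of p "w + p - 1"] mod_less_divisor[of p "w + p - 1"] assms
      unfolding w1_def by linarith+
    have "c div p < p ^ Suc j"
      using Suc.prems(1) assms by (simp add: less_mult_imp_div_less mult.commute)
    moreover have "0 < w1" using w1_bounds(1) Suc.prems(2) by (cases w1) auto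
    moreover have "w1 \<le> c div p"
    proof -
      have "p * w1 < p * Suc (c div p)" using w1_bounds(2) False assms by simp
      then show ?thesis by (simp only: mult_less_cancel1) simp
    qed
    ultimately obtain u1 where u1: "digits_le p u1 (c div p)" "w1 \<le> u1" "u1 < w1 + p ^ j"
      using Suc.IH by blast
    have "digits_le p (p * u1) c"
      using digits_le_iff[of p "p * u1" c] assms u1(1) by simp
    moreover have "w \<le> p * u1" using w1_bounds(1) u1(2) by (meson le_trans mult_le_mono2)
    moreover have "p * u1 < w + p ^ Suc j"
    proof -
      have "p * Suc u1 \<le> p * (w1 + p ^ j)" using u1(3) by (intro mult_le_mono2) simp
      then show ?thesis using w1_bounds(2) assms by (simp add: algebra_simps)
    qed
    ultimately show ?thesis by blast
  qed
qed

lemma digits_le_transfer_amount: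
  assumes "p > 1" "0 < c" "c < p ^ Suc l" "v < th"
  shows "\<exists>u. 0 < u \<and> digits_le p u c \<and> v + u < th + p ^ l"
proof (cases "v + c < th")
  case False
  then have "0 < th - v" "th - v \<le> c" using assms(4) by auto
  then obtain u where "digits_le p u c" "th - v \<le> u" "u < th - v + p ^ l"
    using digits_le_in_window[OF assms(1,3)] by blast
  then show ?thesis using assms(4) by (intro exI[of _ u]) auto
qed (use assms in \<open>auto intro!: exI[of _ c]\<close>)

lemma digits_le_low_part:
  assumes "p > 1"
  shows "L < p ^ j \<Longrightarrow> digits_le p L (a * p ^ j + L)"
proof (induction j arbitrary: L)
  case 0
  then show ?case by simp
next
  case (Suc j)
  have split: "a * p ^ Suc j + L = L + (a * p ^ j) * p" by (simp add: algebra_simps)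
  have "(a * p ^ Suc j + L) mod p = L mod p" "(a * p ^ Suc j + L) div p = a * p ^ j + L div p"
    unfolding split using assms by simp_all
  moreover have "digits_le p (L div p) (a * p ^ j + L div p)"
    using Suc assms by (simp add: div_less_iff_less_mult mult.commute)
  ultimately show ?case using digits_le_iff[of p L "a * p ^ Suc j + L"] assms by simp
qed

section \<open>Polynomial representation of functions on \<open>\<bbbF>\<^sub>q\<^sup>n\<close>\<close>

definition box :: "nat \<Rightarrow> 'b set \<Rightarrow> (nat \<Rightarrow> 'b::zero) set" where
  "box m A = {x. (\<forall>i<m. x i \<in> A) \<and> (\<forall>i\<ge>m. x i = 0)}"

lemma vecs_eq_box: "vecs m = box m UNIV"
  unfolding vecs_def box_def by auto

lemma exps_eq_box: "exps TYPE('a::{field,finite}) m = box m {..CARD('a) - 1}"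
  unfolding exps_def box_def by auto

lemma bij_betw_box_PiE: "bij_betw (\<lambda>x. restrict x {..<m}) (box m A) (\<Pi>\<^sub>E i\<in>{..<m}. A)"
  by (rule bij_betw_byWitness[where f' = "\<lambda>g i. if i < m then g i else 0"])
    (auto simp: box_def fun_eq_iff PiE_def extensional_def)

lemma finite_box: "finite A \<Longrightarrow> finite (box m A)"
  using bij_betw_finite[OF bij_betw_box_PiE[of m A]] by (simp add: finite_PiE)

lemma sum_prod_box:
  fixes \<phi> :: "nat \<Rightarrow> 'b::zero \<Rightarrow> 'c::comm_semiring_1"
  assumes "finite A"
  shows "(\<Sum>x\<in>box m A. \<Prod>i<m. \<phi> i (x i)) = (\<Prod>i<m. \<Sum>t\<in>A. \<phi> i t)"
proof -
  have "(\<Sum>x\<in>box m A. \<Prod>i<m. \<phi> i (x i)) = (\<Sum>x\<in>box m A. \<Prod>i<m. \<phi> i (restrict x {..<m} i))"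
    by simp
  also have "\<dots> = (\<Sum>g\<in>PiE {..<m} (\<lambda>_. A). \<Prod>i<m. \<phi> i (g i))"
    by (rule sum.reindex_bij_betw[OF bij_betw_box_PiE])
  also have "\<dots> = (\<Prod>i<m. \<Sum>t\<in>A. \<phi> i t)"
    using assms by (simp add: prod_sum_PiE)
  finally show ?thesis .
qed

lemma finite_vecs [simp]: "finite (vecs m :: (nat \<Rightarrow> 'a::{field,finite}) set)"
  unfolding vecs_eq_box by (simp add: finite_box)

lemma finite_exps [simp]: "finite (exps TYPE('a::{field,finite}) m)"
  unfolding exps_eq_box by (simp add: finite_box)

lemma sum_prod_vecs:
  "(\<Sum>x\<in>vecs m. \<Prod>i<m. \<phi> i (x i)) = (\<Prod>i<m. \<Sum>t\<in>UNIV. \<phi> i (t::'a::{field,finite}) :: 'c::comm_semiring_1)"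
  unfolding vecs_eq_box by (simp add: sum_prod_box)

lemma sum_prod_exps:
  "(\<Sum>e\<in>exps TYPE('a::{field,finite}) m. \<Prod>i<m. \<phi> i (e i)) = (\<Prod>i<m. \<Sum>t\<le>CARD('a) - 1. \<phi> i t :: 'c::comm_semiring_1)"
  unfolding exps_eq_box by (simp add: sum_prod_box)

lemma vecs_eqI: "x \<in> vecs m \<Longrightarrow> y \<in> vecs m \<Longrightarrow> (\<forall>i<m. x i = y i) \<Longrightarrow> x = y"
  unfolding vecs_def by (auto simp: fun_eq_iff) (metis not_le)

lemma exps_eqI:
  "e \<in> exps TYPE('a::{field,finite}) m \<Longrightarrow> e' \<in> exps TYPE('a) m \<Longrightarrow> (\<forall>i<m. e i = e' i) \<Longrightarrow> e = e'"
  unfolding exps_def by (auto simp: fun_eq_iff) (metis not_le)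

lemma prod_lessThan_if_const:
  "(\<Prod>i<(m::nat). if P i then a else (0::'c::comm_semiring_1)) = (if \<forall>i<m. P i then a ^ m else 0)"
  by (induction m) (auto simp: less_Suc_eq mult.commute)

text \<open>The coefficient of \<open>t\<^sup>c\<close> in a function \<open>g\<close> on \<open>\<bbbF>\<^sub>q\<close> is \<open>\<Sum>\<^sub>t g t * coeff_weight c t\<close>,
  because \<open>\<Sum>\<^sub>t t\<^sup>m\<close> is \<open>-1\<close> when \<open>m\<close> is a positive multiple of \<open>q - 1\<close> and \<open>0\<close> otherwise.\<close>
definition coeff_weight :: "nat \<Rightarrow> 'a::{field,finite} \<Rightarrow> 'a" where
  "coeff_weight c t = (if c = 0 then 1 - t ^ (CARD('a) - 1) else - (t ^ (CARD('a) - 1 - c)))"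

lemma sum_coeff_weight_mult_power:
  assumes "e \<le> CARD('a::{field,finite}) - 1" "c \<le> CARD('a) - 1"
  shows "(\<Sum>t\<in>(UNIV::'a set). coeff_weight c t * t ^ e) = (if e = c then 1 else 0)"
proof -
  define q1 where "q1 = CARD('a) - 1"
  have q1: "1 \<le> q1" "e \<le> q1" "c \<le> q1"
    using assms card_field_ge_2[where 'a='a] unfolding q1_def by auto
  have sum_power: "(\<Sum>t\<in>(UNIV::'a set). t ^ m) = (if 0 < m \<and> q1 dvd m then -1 else 0)" for m
    unfolding q1_def by (rule sum_power_field)
  show ?thesis
  proof (cases "c = 0")
    case True
    have "coeff_weight c t * t ^ e = t ^ e - t ^ (q1 + e)" for t :: 'a
      using True unfolding coeff_weight_def q1_def[symmetric] by (simp add: algebra_simps power_add)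
    then have "(\<Sum>t\<in>(UNIV::'a set). coeff_weight c t * t ^ e)
        = (\<Sum>t\<in>(UNIV::'a set). t ^ e) - (\<Sum>t\<in>(UNIV::'a set). t ^ (q1 + e))"
      by (simp add: sum_subtractf)
    then show ?thesis
      using True q1 by (cases "e = 0") (simp_all add: sum_power of_nat_card_field)
  next
    case False
    have "(\<Sum>t\<in>(UNIV::'a set). coeff_weight c t * t ^ e) = - (\<Sum>t\<in>(UNIV::'a set). t ^ (q1 - c + e))"
      using False by (simp add: coeff_weight_def q1_def power_add sum_negf)
    moreover have "0 < q1 - c + e \<and> q1 dvd (q1 - c + e) \<longleftrightarrow> e = c"
    proof
      assume multiple: "0 < q1 - c + e \<and> q1 dvd (q1 - c + e)"
      then obtain k where k: "q1 - c + e = q1 * k" by blast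
      have "q1 * k < q1 * 2" using q1 False k by linarith
      then have "k < 2" by simp
      moreover have "k \<noteq> 0" using multiple k by auto
      ultimately have "k = 1" by simp
      then show "e = c" using q1 k by simp
    qed (use q1 in auto)
    ultimately show ?thesis by (simp add: sum_power)
  qed
qed

lemma sum_coeff_weight_interpolation:
  "(\<Sum>c\<le>CARD('a) - 1. coeff_weight c u * v ^ c) = (if u = v then 1 else (0::'a::{field,finite}))"
proof -
  define q where "q = CARD('a)"
  have q2: "2 \<le> q" unfolding q_def by (rule card_field_ge_2)
  define G where "G = (\<Sum>c<q. u ^ (q - Suc c) * v ^ c)"
  have "{..q - 1} = {..<q}" using q2 by auto
  then have "(\<Sum>c\<le>CARD('a) - 1. coeff_weight c u * v ^ c)
      = (\<Sum>c<q. (if c = 0 then 1 else 0) - u ^ (q - Suc c) * v ^ c)"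
    unfolding q_def[symmetric] by (intro sum.cong) (simp_all add: coeff_weight_def q_def)
  also have "\<dots> = 1 - G" unfolding G_def using q2 by (simp add: sum_subtractf)
  also have "\<dots> = (if u = v then 1 else 0)"
  proof (cases "u = v")
    case True
    have "G = of_nat q * u ^ (q - 1)" unfolding G_def True
      by (simp add: power_add[symmetric])
    then show ?thesis using True by (simp add: q_def of_nat_card_field)
  next
    case False
    have "v ^ q - u ^ q = (v - u) * G" unfolding G_def by (rule power_diff_sumr2)
    then have "(v - u) * 1 = (v - u) * G" by (simp add: q_def power_card_field)
    then have "G = 1" using False by (metis eq_iff_diff_eq_0 mult_left_cancel)
    then show ?thesis using False by simp
  qed
  finally show ?thesis .
qed

lemma sum_mono_mult_coeff_weights:
  assumes "e \<in> exps TYPE('a::{field,finite}) n" "e' \<in> exps TYPE('a) n"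
  shows "(\<Sum>y\<in>vecs n. mono n e y * (\<Prod>i<n. coeff_weight (e' i) (y i::'a))) = (if e = e' then 1 else 0)"
proof -
  have "(\<Sum>y\<in>vecs n. mono n e y * (\<Prod>i<n. coeff_weight (e' i) (y i::'a)))
      = (\<Prod>i<n. \<Sum>t\<in>UNIV. coeff_weight (e' i) t * t ^ e i)"
    using sum_prod_vecs[of "\<lambda>i t. coeff_weight (e' i) t * t ^ e i" n]
    by (simp add: mono_def mult.commute flip: prod.distrib)
  also have "\<dots> = (\<Prod>i<n. if e i = e' i then 1 else 0)"
    using assms unfolding exps_def by (intro prod.cong refl sum_coeff_weight_mult_power) auto
  also have "\<dots> = (if e = e' then 1 else 0)"
    using exps_eqI[OF assms] by (auto simp: prod_lessThan_if_const)
  finally show ?thesis .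
qed

lemma repr_by_coeff_weights:
  fixes f :: "(nat \<Rightarrow> 'a::{field,finite}) \<Rightarrow> 'a"
  assumes "x \<in> vecs n"
  shows "f x = (\<Sum>e\<in>exps TYPE('a) n.
                  (\<Sum>y\<in>vecs n. f y * (\<Prod>i<n. coeff_weight (e i) (y i))) * mono n e x)"
proof -
  have "(\<Sum>e\<in>exps TYPE('a) n. (\<Sum>y\<in>vecs n. f y * (\<Prod>i<n. coeff_weight (e i) (y i))) * mono n e x)
      = (\<Sum>y\<in>vecs n. f y * (\<Sum>e\<in>exps TYPE('a) n. \<Prod>i<n. coeff_weight (e i) (y i) * x i ^ e i))"
    by (simp add: mono_def sum_distrib_left sum_distrib_right prod.distrib mult.assoc sum.swap[of _ "vecs n"])
  also have "\<dots> = (\<Sum>y\<in>vecs n. f y * (\<Prod>i<n. if y i = x i then 1 else 0))"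
    using sum_prod_exps[where 'a='a and m=n, of "\<lambda>i c. coeff_weight c (_ i) * x i ^ c"]
    by (simp add: sum_coeff_weight_interpolation[simplified])
  also have "\<dots> = (\<Sum>y\<in>vecs n. if y = x then f y else 0)"
    using vecs_eqI assms by (intro sum.cong) (auto simp: prod_lessThan_if_const)
  also have "\<dots> = f x" using assms by simp
  finally show ?thesis by simp
qed

lemma coeff_eq_sum_coeff_weights:
  fixes f :: "(nat \<Rightarrow> 'a::{field,finite}) \<Rightarrow> 'a"
  assumes "\<forall>x\<in>vecs n. f x = (\<Sum>e\<in>exps TYPE('a) n. C e * mono n e x)" "e' \<in> exps TYPE('a) n"
  shows "C e' = (\<Sum>y\<in>vecs n. f y * (\<Prod>i<n. coeff_weight (e' i) (y i)))"
proof -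
  have "(\<Sum>y\<in>vecs n. f y * (\<Prod>i<n. coeff_weight (e' i) (y i)))
      = (\<Sum>e\<in>exps TYPE('a) n. C e * (\<Sum>y\<in>vecs n. mono n e y * (\<Prod>i<n. coeff_weight (e' i) (y i))))"
    using assms(1) by (simp add: sum_distrib_right sum_distrib_left mult.assoc sum.swap[of _ "vecs n"])
  also have "\<dots> = (\<Sum>e\<in>exps TYPE('a) n. if e = e' then C e else 0)"
    using assms(2) by (intro sum.cong) (simp_all add: sum_mono_mult_coeff_weights)
  also have "\<dots> = C e'" using assms(2) by simp
  finally show ?thesis by simp
qed

lemma coeffs_eq_sum:
  fixes f :: "(nat \<Rightarrow> 'a::{field,finite}) \<Rightarrow> 'a"
  shows "coeffs n f e = (if e \<in> exps TYPE('a) n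
            then \<Sum>y\<in>vecs n. f y * (\<Prod>i<n. coeff_weight (e i) (y i)) else 0)"
proof -
  let ?C = "\<lambda>e. if e \<in> exps TYPE('a) n then \<Sum>y\<in>vecs n. f y * (\<Prod>i<n. coeff_weight (e i) (y i)) else 0"
  let ?repr = "\<lambda>C. (\<forall>e. e \<notin> exps TYPE('a) n \<longrightarrow> C e = 0) \<and>
                    (\<forall>x\<in>vecs n. f x = (\<Sum>e\<in>exps TYPE('a) n. C e * mono n e x))"
  have repr: "?repr ?C"
    using repr_by_coeff_weights[of _ n f] by simp
  have "coeffs n f = ?C"
    unfolding Defs.coeffs_def
  proof (rule the_equality)
    fix C
    assume "?repr C"
    then show "C = ?C" using coeff_eq_sum_coeff_weights[of n f C] by auto
  qed (rule repr)
  then show ?thesis by simp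
qed

lemma coeffs_repr:
  fixes f :: "(nat \<Rightarrow> 'a::{field,finite}) \<Rightarrow> 'a"
  assumes "x \<in> vecs n"
  shows "f x = (\<Sum>e\<in>exps TYPE('a) n. coeffs n f e * mono n e x)"
  using repr_by_coeff_weights[OF assms, of f] by (simp add: coeffs_eq_sum)

section \<open>Functions annihilated by \<open>h\<close> along all affine maps\<close>

definition annihilated :: "nat \<Rightarrow> nat \<Rightarrow> ((nat \<Rightarrow> 'a::{field,finite}) \<Rightarrow> 'a) \<Rightarrow> ((nat \<Rightarrow> 'a) \<Rightarrow> 'a) \<Rightarrow> bool" where
  "annihilated m k h \<phi> \<longleftrightarrow> (\<forall>T\<in>affine_maps m k. inner k (\<phi> \<circ> T) h = 0)"

lemma Fam_eq: "Fam n k h = {f \<in> funs n. annihilated n k h f}"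
  unfolding Fam_def annihilated_def by simp

lemma affine_in_vecs [simp]: "affine m k A b x \<in> vecs m"
  unfolding affine_def vecs_def by simp

lemma affine_affine:
  "affine m n A b (affine n k A' b' y) =
   affine m k (\<lambda>r j. \<Sum>c<n. A r c * A' c j) (\<lambda>r. (\<Sum>c<n. A r c * b' c) + b r) y"
  unfolding affine_def
  by (auto simp: fun_eq_iff sum_distrib_left sum_distrib_right distrib_left sum.distrib mult.assoc
      intro!: sum.swap)

lemma sum_delta_mult:
  "(\<Sum>c<(n::nat). (if r = c then a else 0) * (z c :: 'a::comm_semiring_1)) = (if r < n then a * z r else 0)"
proof -
  have "(\<Sum>c<n. (if r = c then a else 0) * z c) = (\<Sum>c<n. if c = r then a * z r else 0)"
    by (intro sum.cong) auto
  then show ?thesis by simp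
qed

lemma annihilated_cong:
  assumes "annihilated m k h \<phi>" "\<And>z. z \<in> vecs m \<Longrightarrow> \<phi> z = \<psi> z"
  shows "annihilated m k h \<psi>"
  unfolding annihilated_def
proof
  fix T :: "(nat \<Rightarrow> 'a) \<Rightarrow> nat \<Rightarrow> 'a"
  assume T: "T \<in> affine_maps m k"
  then have "T x \<in> vecs m" for x unfolding affine_maps_def by auto
  then have "inner k (\<psi> \<circ> T) h = inner k (\<phi> \<circ> T) h"
    unfolding inner_def using assms(2) by simp
  then show "inner k (\<psi> \<circ> T) h = 0"
    using assms(1) T unfolding annihilated_def by simp
qed

lemma annihilated_sum:
  fixes \<phi> :: "'i \<Rightarrow> (nat \<Rightarrow> 'a::{field,finite}) \<Rightarrow> 'a"
  assumes "finite I" "\<And>i. i \<in> I \<Longrightarrow> annihilated m k h (\<phi> i)"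
  shows "annihilated m k h (\<lambda>z. \<Sum>i\<in>I. c i * \<phi> i z)"
  unfolding annihilated_def
proof
  fix T :: "(nat \<Rightarrow> 'a) \<Rightarrow> nat \<Rightarrow> 'a"
  assume T: "T \<in> affine_maps m k"
  have "inner k ((\<lambda>z. \<Sum>i\<in>I. c i * \<phi> i z) \<circ> T) h = (\<Sum>i\<in>I. c i * inner k (\<phi> i \<circ> T) h)"
    unfolding inner_def by (simp add: sum_distrib_right sum_distrib_left mult.assoc sum.swap[of _ I])
  also have "\<dots> = 0" using assms(2) T unfolding annihilated_def by simp
  finally show "inner k ((\<lambda>z. \<Sum>i\<in>I. c i * \<phi> i z) \<circ> T) h = 0" .
qed

lemma annihilated_cancel_factor:
  assumes "annihilated m k h (\<lambda>z. c * \<phi> z)" "c \<noteq> 0"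
  shows "annihilated m k h \<phi>"
  using annihilated_sum[of "{()}" m k h "\<lambda>_ z. c * \<phi> z" "\<lambda>_. inverse c"] assms
  by (simp add: field_simps)

lemma annihilated_comp_affine:
  assumes "annihilated n k h \<phi>"
  shows "annihilated m k h (\<lambda>z. \<phi> (affine n m A b z))"
  unfolding annihilated_def
proof
  fix T :: "(nat \<Rightarrow> 'a) \<Rightarrow> nat \<Rightarrow> 'a"
  assume "T \<in> affine_maps m k"
  then obtain A' b' where T: "T = affine m k A' b'" unfolding affine_maps_def by blast
  let ?T' = "affine n k (\<lambda>r j. \<Sum>c<m. A r c * A' c j) (\<lambda>r. (\<Sum>c<m. A r c * b' c) + b r)"
  have "(\<lambda>z. \<phi> (affine n m A b z)) \<circ> T = \<phi> \<circ> ?T'"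
    unfolding T by (simp add: fun_eq_iff affine_affine)
  moreover have "?T' \<in> affine_maps n k" unfolding affine_maps_def by blast
  ultimately show "inner k ((\<lambda>z. \<phi> (affine n m A b z)) \<circ> T) h = 0"
    using assms unfolding annihilated_def by simp
qed

text \<open>Averaging \<open>f\<close> over the coordinate scalings \<open>z \<mapsto> (L\<^sub>i z\<^sub>i)\<^sub>i\<close> against the coefficient
  weights of \<open>e\<close> isolates the term \<open>C\<^sub>e x\<^sup>e\<close> of \<open>f\<close>.\<close>
lemma annihilated_mono_of_coeffs:
  fixes f :: "(nat \<Rightarrow> 'a::{field,finite}) \<Rightarrow> 'a"
  assumes "annihilated n k h f" "e \<in> exps TYPE('a) n" "coeffs n f e \<noteq> 0"
  shows "annihilated n k h (mono n e)"
proof -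
  define D :: "(nat \<Rightarrow> 'a) \<Rightarrow> (nat \<Rightarrow> 'a) \<Rightarrow> nat \<Rightarrow> 'a"
    where "D L = affine n n (\<lambda>r c. if r = c then L r else 0) (\<lambda>_. 0)" for L
  have mono_D: "mono n e' (D L z) = mono n e' L * mono n e' z" for e' L z
    unfolding D_def mono_def affine_def
    by (simp add: sum_delta_mult power_mult_distrib prod.distrib)
  define G where "G z = (\<Sum>L\<in>vecs n. (\<Prod>i<n. coeff_weight (e i) (L i)) * f (D L z))" for z
  have "annihilated n k h G"
    unfolding G_def D_def by (intro annihilated_sum annihilated_comp_affine assms(1)) simp
  moreover have "G z = coeffs n f e * mono n e z" for z
  proof -
    have "G z = (\<Sum>e'\<in>exps TYPE('a) n. coeffs n f e' * mono n e' z *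
                   (\<Sum>L\<in>vecs n. mono n e' L * (\<Prod>i<n. coeff_weight (e i) (L i))))"
      unfolding G_def D_def coeffs_repr[OF affine_in_vecs, of f] mono_D[unfolded D_def]
      by (simp add: sum_distrib_left sum_distrib_right mult_ac sum.swap[of _ "vecs n"])
    also have "\<dots> = (\<Sum>e'\<in>exps TYPE('a) n. if e' = e then coeffs n f e * mono n e z else 0)"
      using assms(2) by (intro sum.cong) (simp_all add: sum_mono_mult_coeff_weights)
    finally show ?thesis using assms(2) by simp
  qed
  ultimately have "annihilated n k h (\<lambda>z. coeffs n f e * mono n e z)"
    by (rule annihilated_cong)
  then show ?thesis using assms(3) by (rule annihilated_cancel_factor)
qed

lemma mono_cong:
  assumes "\<And>i. i < m \<Longrightarrow> c i \<noteq> 0 \<Longrightarrow> z i = z' i"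
  shows "mono m c z = mono m c z'"
  unfolding mono_def
proof (intro prod.cong refl)
  fix i assume "i \<in> {..<m}"
  then show "z i ^ c i = z' i ^ c i" using assms by (cases "c i = 0") auto
qed

lemma mono_eq_power_mult:
  assumes "j < m"
  shows "mono m c z = z j ^ c j * mono m (c(j := 0)) z"
proof -
  have "mono m (c(j := 0)) z = (\<Prod>i\<in>{..<m}-{j}. z i ^ c i)"
    unfolding mono_def using assms by (subst prod.remove[of _ j]) (auto intro!: prod.cong)
  then show ?thesis unfolding mono_def using assms by (subst prod.remove[of _ j]) auto
qed

lemma sum_coeff_weight_mult_linear_power:
  fixes a b :: "'a::{field,finite}"
  assumes "N \<le> CARD('a) - 1" "t0 \<le> N"
  shows "(\<Sum>l\<in>UNIV. coeff_weight t0 l * (l * a + b) ^ N) = of_nat (N choose t0) * a ^ t0 * b ^ (N - t0)"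
proof -
  have "(\<Sum>l\<in>UNIV. coeff_weight t0 l * (l * a + b) ^ N)
      = (\<Sum>t\<le>N. of_nat (N choose t) * a ^ t * b ^ (N - t) * (\<Sum>l\<in>UNIV. coeff_weight t0 l * l ^ t))"
    by (simp add: binomial_ring power_mult_distrib sum_distrib_left sum_distrib_right mult_ac
        sum.swap[of _ UNIV])
  also have "\<dots> = (\<Sum>t\<le>N. if t = t0 then of_nat (N choose t) * a ^ t * b ^ (N - t) else 0)"
    using assms by (intro sum.cong) (simp_all add: sum_coeff_weight_mult_power)
  finally show ?thesis using assms(2) by simp
qed

lemma mono_fun_upd:
  assumes "j < m"
  shows "mono m c (z(j := w)) = w ^ c j * mono m (c(j := 0)) z"
proof -
  have "mono m (c(j := 0)) (z(j := w)) = mono m (c(j := 0)) z" by (rule mono_cong) (simp split: if_splits)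
  then show ?thesis using mono_eq_power_mult[OF assms, of c "z(j := w)"] by simp
qed

lemma mono_transfer_eq:
  assumes "j < m" "i < m" "j \<noteq> i"
  shows "mono m (c(j := c j - u, i := c i + u)) z = z j ^ (c j - u) * z i ^ u * mono m (c(j := 0)) z"
proof -
  have "mono m (c(j := c j - u, i := c i + u)) z = z j ^ (c j - u) * mono m (c(j := 0, i := c i + u)) z"
    using mono_eq_power_mult[OF assms(1), of "c(j := c j - u, i := c i + u)" z] assms(3)
    by (simp add: fun_upd_twist)
  also have "\<dots> = z j ^ (c j - u) * (z i ^ (c i + u) * mono m (c(j := 0, i := 0)) z)"
    using mono_eq_power_mult[OF assms(2), of "c(j := 0, i := c i + u)" z] by simp
  also have "\<dots> = z j ^ (c j - u) * z i ^ u * (z i ^ c i * mono m (c(j := 0, i := 0)) z)"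
    by (simp add: power_add mult_ac)
  also have "z i ^ c i * mono m (c(j := 0, i := 0)) z = mono m (c(j := 0)) z"
    using mono_eq_power_mult[OF assms(2), of "c(j := 0)" z] assms(3) by simp
  finally show ?thesis .
qed

lemma annihilated_comp_shear:
  fixes \<phi> :: "(nat \<Rightarrow> 'a::{field,finite}) \<Rightarrow> 'a"
  assumes "annihilated m k h \<phi>" "j < m" "i < m" "j \<noteq> i"
  shows "annihilated m k h (\<lambda>z. \<phi> (z(j := l * z j + z i)))"
proof -
  define A where "A r col = (if r = j then (if col = j then l else if col = i then 1 else 0)
                             else if r = col then 1 else 0)" for r col
  have shear: "affine m m A (\<lambda>_. 0) z = z(j := l * z j + z i)" if "z \<in> vecs m" for z
  proof
    fix r
    have "(\<Sum>col<m. (if col = j then l else if col = i then 1 else 0) * z col)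
        = (\<Sum>col<m. (if col = j then l * z j else 0) + (if col = i then z i else 0))"
      using assms(4) by (intro sum.cong) auto
    then show "affine m m A (\<lambda>_. 0) z r = (z(j := l * z j + z i)) r"
      using assms(2-4) that unfolding A_def affine_def vecs_def
      by (auto simp: sum.distrib sum_delta_mult)
  qed
  show ?thesis
    by (rule annihilated_cong[OF annihilated_comp_affine[OF assms(1), of m A "\<lambda>_. 0"]]) (simp add: shear)
qed

text \<open>Averaging the shears \<open>z\<^sub>j \<mapsto> l z\<^sub>j + z\<^sub>i\<close> against the coefficient weight of
  \<open>l\<^sup>N\<^sup>-\<^sup>u\<close> keeps the single term \<open>(N choose u) z\<^sub>j\<^sup>N\<^sup>-\<^sup>u z\<^sub>i\<^sup>u\<close> of the binomial
  expansion, and Lucas' theorem makes its coefficient nonzero.\<close>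
lemma annihilated_mono_transfer:
  fixes h :: "(nat \<Rightarrow> 'a::{field,finite}) \<Rightarrow> 'a"
  assumes "annihilated m k h (mono m c)" "j < m" "i < m" "j \<noteq> i" "c j \<le> CARD('a) - 1"
    and "digits_le p u (c j)" "prime p" "CHAR('a) = p"
  shows "annihilated m k h (mono m (c(j := c j - u, i := c i + u)))"
proof -
  define N where "N = c j"
  have u: "u \<le> N"
    using digits_le_imp_le[OF prime_gt_1_nat[OF assms(7)] assms(6)] unfolding N_def .
  define B :: "(nat \<Rightarrow> 'a) \<Rightarrow> 'a" where "B = mono m (c(j := 0))"
  have "annihilated m k h (\<lambda>z. \<Sum>l\<in>UNIV. coeff_weight (N - u) l * mono m c (z(j := l * z j + z i)))"
    using assms(1-4) by (intro annihilated_sum annihilated_comp_shear) simp_all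
  moreover have "(\<Sum>l\<in>UNIV. coeff_weight (N - u) l * mono m c (z(j := l * z j + z i)))
      = of_nat (N choose (N - u)) * (z j ^ (N - u) * z i ^ u * B z)" for z
  proof -
    have "(\<Sum>l\<in>UNIV. coeff_weight (N - u) l * mono m c (z(j := l * z j + z i)))
        = (\<Sum>l\<in>UNIV. coeff_weight (N - u) l * (l * z j + z i) ^ N) * B z"
      by (simp add: mono_fun_upd[OF assms(2)] B_def N_def sum_distrib_left sum_distrib_right mult_ac)
    then show ?thesis
      using assms(5) u by (simp add: sum_coeff_weight_mult_linear_power N_def mult_ac)
  qed
  ultimately have "annihilated m k h (\<lambda>z. of_nat (N choose (N - u)) * (z j ^ (N - u) * z i ^ u * B z))"
    by (rule annihilated_cong)
  moreover have "(of_nat (N choose (N - u)) :: 'a) \<noteq> 0"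
    using of_nat_binomial_neq_0_if_digits_le[OF assms(7,8,6)] u
    by (simp add: N_def binomial_symmetric[symmetric])
  ultimately have "annihilated m k h (\<lambda>z. z j ^ (N - u) * z i ^ u * B z)"
    by (rule annihilated_cancel_factor)
  then show ?thesis
    unfolding B_def N_def by (rule annihilated_cong) (simp add: mono_transfer_eq assms(2-4))
qed

section \<open>Inner products of monomials with \<open>h\<close>\<close>

lemma finite_degrees_of_coeffs:
  "finite {(\<Sum>i<n. e i) | e. e \<in> exps TYPE('a::{field,finite}) n \<and> coeffs n f e \<noteq> 0}"
  by (rule finite_subset[OF _ finite_imageI[OF finite_exps[where 'a='a and m=n], of "\<lambda>e. \<Sum>i<n. e i"]]) auto

lemma degree_le_deg:
  fixes f :: "(nat \<Rightarrow> 'a::{field,finite}) \<Rightarrow> 'a"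
  assumes "e \<in> exps TYPE('a) n" "coeffs n f e \<noteq> 0"
  shows "(\<Sum>i<n. e i) \<le> deg n f"
  unfolding deg_def using assms finite_degrees_of_coeffs[of n f] by (intro Max_ge) auto

lemma less_deg_imp_coeffs:
  fixes f :: "(nat \<Rightarrow> 'a::{field,finite}) \<Rightarrow> 'a"
  assumes "d < deg n f"
  obtains e where "e \<in> exps TYPE('a) n" "coeffs n f e \<noteq> 0" "d < (\<Sum>i<n. e i)"
proof -
  have "deg n f \<in> insert 0 {(\<Sum>i<n. e i) | e. e \<in> exps TYPE('a) n \<and> coeffs n f e \<noteq> 0}"
    unfolding deg_def using finite_degrees_of_coeffs[of n f] by (intro Max_in) auto
  then show ?thesis using assms that by auto
qed

lemma mono_mult: "mono k a y * mono k b y = mono k (\<lambda>i. a i + b i) y"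
  unfolding mono_def by (simp add: power_add prod.distrib)

lemma sum_vecs_mono:
  "(\<Sum>y\<in>vecs k. mono k e y :: 'a::{field,finite}) =
     (if \<forall>i<k. 0 < e i \<and> (CARD('a) - 1) dvd e i then (-1) ^ k else 0)"
  unfolding mono_def sum_prod_vecs[of "\<lambda>i t. t ^ e i"] sum_power_field
  by (simp add: prod_lessThan_if_const)

lemma sum_ge_of_positive_multiples:
  fixes x :: "nat \<Rightarrow> nat"
  assumes "\<forall>i<k. 0 < x i \<and> Q dvd x i" "i0 < k" "x i0 \<noteq> Q"
  shows "Q * Suc k \<le> (\<Sum>i<k. x i)"
proof -
  have ge: "Q \<le> x i" if "i < k" for i
    using assms(1) that by (auto dest: dvd_imp_le)
  obtain t where t: "x i0 = Q * t" using assms(1,2) by blast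
  then have "t \<noteq> 0" "t \<noteq> 1" using assms by auto
  then have "Q * 2 \<le> x i0" unfolding t by (intro mult_le_mono2) simp
  moreover have "Q * (k - 1) \<le> (\<Sum>i\<in>{..<k}-{i0}. x i)"
    using sum_mono[of "{..<k}-{i0}" "\<lambda>_. Q" x] ge assms(2) by (simp add: mult.commute)
  moreover have "(\<Sum>i<k. x i) = x i0 + (\<Sum>i\<in>{..<k}-{i0}. x i)"
    using assms(2) by (simp add: sum.remove)
  moreover have "Q * Suc k = Q * 2 + Q * (k - 1)"
    using assms(2) by (simp add: algebra_simps flip: distrib_left)
  ultimately show ?thesis by linarith
qed

lemma sum_vecs_mono_eq_0:
  assumes "i0 < k" "e i0 \<noteq> CARD('a) - 1" "(\<Sum>i<k. e i) < (CARD('a) - 1) * Suc k"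
  shows "(\<Sum>y\<in>vecs k. mono k e y :: 'a::{field,finite}) = 0"
proof -
  have "\<not> (\<forall>i<k. 0 < e i \<and> (CARD('a) - 1) dvd e i)"
  proof
    assume "\<forall>i<k. 0 < e i \<and> (CARD('a) - 1) dvd e i"
    from sum_ge_of_positive_multiples[OF this assms(1,2)] show False using assms(3) by simp
  qed
  then show ?thesis unfolding sum_vecs_mono by (rule if_not_P)
qed

text \<open>Summing \<open>x\<^sup>a\<close> against the polynomial of \<open>h\<close> over \<open>\<bbbF>\<^sub>q\<^sup>k\<close> only sees monomials whose
  exponents complement \<open>a\<close> to nonzero multiples of \<open>q - 1\<close>; the degree bound leaves only the
  exact complement.\<close>
lemma inner_mono_eq_coeffs:
  fixes h :: "(nat \<Rightarrow> 'a::{field,finite}) \<Rightarrow> 'a"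
  assumes "\<forall>i<k. a i \<le> CARD('a) - 1" "deg k h + (\<Sum>i<k. a i) < (CARD('a) - 1) * Suc k"
  shows "inner k (mono k a) h = (-1) ^ k * coeffs k h (\<lambda>i. if i < k then CARD('a) - 1 - a i else 0)"
proof -
  define b' where "b' = (\<lambda>i. if i < k then CARD('a) - 1 - a i else 0)"
  have b': "b' \<in> exps TYPE('a) k" unfolding b'_def exps_def by auto
  have summand: "coeffs k h b * (\<Sum>y\<in>vecs k. mono k (\<lambda>i. a i + b i) y) =
      (if b = b' then (-1) ^ k * coeffs k h b' else 0)" if b: "b \<in> exps TYPE('a) k" for b
  proof (cases "b = b'")
    case True
    have "0 < CARD('a) - 1" using card_field_ge_2[where 'a='a] by simp
    moreover have "\<forall>i<k. a i + b i = CARD('a) - 1" using True assms(1) b'_def by auto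
    ultimately show ?thesis using True by (simp add: sum_vecs_mono)
  next
    case False
    then obtain i0 where i0: "i0 < k" "b i0 \<noteq> b' i0" using exps_eqI[OF b b'] by blast
    have "(\<Sum>y\<in>vecs k. mono k (\<lambda>i. a i + b i) y) = (0::'a) \<or> coeffs k h b = 0"
    proof (rule disjCI)
      assume "coeffs k h b \<noteq> 0"
      from degree_le_deg[OF b this] have small: "(\<Sum>i<k. a i + b i) < (CARD('a) - 1) * Suc k"
        using assms(2) unfolding sum.distrib by linarith
      have "a i0 + b i0 \<noteq> CARD('a) - 1" using i0 assms(1) by (auto simp: b'_def)
      from sum_vecs_mono_eq_0[OF i0(1) this small]
      show "(\<Sum>y\<in>vecs k. mono k (\<lambda>i. a i + b i) y) = (0::'a)" .
    qed
    then show ?thesis using False by auto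
  qed
  have "inner k (mono k a) h = (\<Sum>b\<in>exps TYPE('a) k. coeffs k h b * (\<Sum>y\<in>vecs k. mono k (\<lambda>i. a i + b i) y))"
    unfolding inner_def
    by (simp add: coeffs_repr[of _ k h] sum_distrib_left sum_distrib_right mult_ac mono_mult
        sum.swap[of _ "vecs k"] add.commute)
  also have "\<dots> = (-1) ^ k * coeffs k h b'"
    using b' by (simp add: summand cong: sum.cong)
  finally show ?thesis unfolding b'_def .
qed

lemma prod_lessThan_add_split: "(\<Prod>i<n + (t::nat). g i) = (\<Prod>i<n. g i) * (\<Prod>i<t. g (n + i))"
  by (induction t) (simp_all add: mult.assoc)

lemma sum_lessThan_add_split: "(\<Sum>i<n + (t::nat). g i) = (\<Sum>i<n. g i) + (\<Sum>i<t. g (n + i))"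
  by (induction t) (simp_all add: add.assoc)

lemma inner_mono_restrict_eq_0:
  fixes h :: "(nat \<Rightarrow> 'a::{field,finite}) \<Rightarrow> 'a"
  assumes "annihilated (n + m) k h (mono (n + m) c)" "m \<le> k"
  shows "inner k (mono k (\<lambda>i. if i < m then c (n + i) else 0)) h = 0"
proof -
  define T where "T = affine (n + m) k (\<lambda>r col. if n \<le> r \<and> r - n = col then 1 else 0)
                                         (\<lambda>r. if r < n then 1 else (0::'a))"
  have T_apply: "T y r = (if r < n then 1 else y (r - n))" if "r < n + m" for y r
  proof -
    have "(\<Sum>col<k. (if n \<le> r \<and> r - n = col then 1 else 0) * y col) = (if n \<le> r then y (r - n) else 0)"
      using that assms(2) sum_delta_mult[where r="r - n" and a=1 and n=k and z=y] by auto
    then show ?thesis using that unfolding T_def affine_def by simp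
  qed
  have "mono (n + m) c (T y) = (\<Prod>i<m. y i ^ c (n + i))" for y
    unfolding mono_def prod_lessThan_add_split by (simp add: T_apply)
  also have "(\<Prod>i<m. y i ^ c (n + i)) = mono k (\<lambda>i. if i < m then c (n + i) else 0) y" for y
    using prod_lessThan_add_split[where n=m and t="k - m" and g="\<lambda>i. y i ^ (if i < m then c (n + i) else 0)"] assms(2)
    by (simp add: mono_def)
  finally have "mono (n + m) c \<circ> T = mono k (\<lambda>i. if i < m then c (n + i) else 0)"
    by (simp add: fun_eq_iff)
  moreover have "T \<in> affine_maps (n + m) k" unfolding T_def affine_maps_def by blast
  ultimately show ?thesis using assms(1) unfolding annihilated_def by metis
qed

section \<open>Functions of low degree are annihilated\<close>

text \<open>A polynomial in \<open>k\<close> variables is kept as a list of (coefficient, exponent) terms, so that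
  a product is just the list of pairwise products, with no collecting of equal exponents.\<close>
definition eval_terms :: "nat \<Rightarrow> ('a \<times> (nat \<Rightarrow> nat)) list \<Rightarrow> (nat \<Rightarrow> 'a) \<Rightarrow> 'a::field" where
  "eval_terms k ts y = (\<Sum>(c, e)\<leftarrow>ts. c * mono k e y)"

definition poly_deg_le :: "nat \<Rightarrow> nat \<Rightarrow> ((nat \<Rightarrow> 'a::field) \<Rightarrow> 'a) \<Rightarrow> bool" where
  "poly_deg_le k D \<phi> \<longleftrightarrow>
     (\<exists>ts. (\<forall>(c, e)\<in>set ts. (\<Sum>j<k. e j) \<le> D) \<and> (\<forall>y. \<phi> y = eval_terms k ts y))"

lemma eval_terms_append: "eval_terms k (ts @ ts') y = eval_terms k ts y + eval_terms k ts' y"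
  unfolding eval_terms_def by simp

lemma eval_terms_mult:
  "eval_terms k [(c * c', \<lambda>j. e j + e' j). (c, e) \<leftarrow> ts, (c', e') \<leftarrow> ts'] y
     = eval_terms k ts y * eval_terms k ts' y"
proof (induction ts)
  case (Cons t ts)
  obtain c e where t: "t = (c, e)" by fastforce
  have "eval_terms k [(c * c', \<lambda>j. e j + e' j). (c', e') \<leftarrow> ts'] y = c * mono k e y * eval_terms k ts' y"
    by (induction ts') (auto simp: eval_terms_def algebra_simps simp flip: mono_mult)
  then show ?case using Cons by (simp add: t eval_terms_append) (simp add: eval_terms_def algebra_simps)
qed (simp add: eval_terms_def)

lemma poly_deg_le_const: "poly_deg_le k D (\<lambda>y. c)"
  unfolding poly_deg_le_def
  by (rule exI[of _ "[(c, \<lambda>_. 0)]"]) (simp add: eval_terms_def mono_def)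

lemma poly_deg_le_var:
  assumes "j < k"
  shows "poly_deg_le k 1 (\<lambda>y. y j)"
  unfolding poly_deg_le_def
proof (rule exI[of _ "[(1, \<lambda>i. if i = j then 1 else 0)]"], intro conjI allI)
  fix y :: "nat \<Rightarrow> 'a"
  have "(\<Prod>i<k. y i ^ (if i = j then 1 else 0)) = (\<Prod>i<k. if i = j then y j else 1)"
    by (intro prod.cong) auto
  then show "y j = eval_terms k [(1, \<lambda>i. if i = j then 1 else 0)] y"
    using assms by (simp add: eval_terms_def mono_def)
qed (use assms in auto)

lemma poly_deg_le_mono_fun: "poly_deg_le k (\<Sum>i<k. e i) (mono k e)"
  unfolding poly_deg_le_def by (rule exI[of _ "[(1, e)]"]) (simp add: eval_terms_def)

lemma poly_deg_le_mono: "poly_deg_le k D \<phi> \<Longrightarrow> D \<le> D' \<Longrightarrow> poly_deg_le k D' \<phi>"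
  unfolding poly_deg_le_def by fastforce

lemma poly_deg_le_add:
  "poly_deg_le k D \<phi> \<Longrightarrow> poly_deg_le k D \<psi> \<Longrightarrow> poly_deg_le k D (\<lambda>y. \<phi> y + \<psi> y)"
  unfolding poly_deg_le_def by (metis (no_types, lifting) Un_iff eval_terms_append set_append)

lemma poly_deg_le_mult:
  assumes "poly_deg_le k D \<phi>" "poly_deg_le k D' \<psi>"
  shows "poly_deg_le k (D + D') (\<lambda>y. \<phi> y * \<psi> y)"
proof -
  obtain ts where ts: "\<forall>(c, e)\<in>set ts. (\<Sum>j<k. e j) \<le> D" "\<forall>y. \<phi> y = eval_terms k ts y"
    using assms(1) unfolding poly_deg_le_def by blast
  obtain ts' where ts': "\<forall>(c, e)\<in>set ts'. (\<Sum>j<k. e j) \<le> D'" "\<forall>y. \<psi> y = eval_terms k ts' y"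
    using assms(2) unfolding poly_deg_le_def by blast
  show ?thesis
    unfolding poly_deg_le_def
    using ts ts' by (intro exI[of _ "[(c * c', \<lambda>j. e j + e' j). (c, e) \<leftarrow> ts, (c', e') \<leftarrow> ts']"])
      (fastforce simp: eval_terms_mult sum.distrib intro: add_mono)
qed

lemma poly_deg_le_scale: "poly_deg_le k D \<phi> \<Longrightarrow> poly_deg_le k D (\<lambda>y. c * \<phi> y)"
  using poly_deg_le_mult[OF poly_deg_le_const[of k 0 c], of D \<phi>] by simp

lemma poly_deg_le_sum:
  "finite I \<Longrightarrow> (\<And>i. i \<in> I \<Longrightarrow> poly_deg_le k D (\<phi> i)) \<Longrightarrow> poly_deg_le k D (\<lambda>y. \<Sum>i\<in>I. \<phi> i y)"
  by (induction I rule: finite_induct) (simp_all add: poly_deg_le_const poly_deg_le_add)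

lemma poly_deg_le_prod:
  "finite I \<Longrightarrow> (\<And>i. i \<in> I \<Longrightarrow> poly_deg_le k (D i) (\<phi> i)) \<Longrightarrow>
     poly_deg_le k (\<Sum>i\<in>I. D i) (\<lambda>y. \<Prod>i\<in>I. \<phi> i y)"
  by (induction I rule: finite_induct) (simp_all add: poly_deg_le_const poly_deg_le_mult)

lemma poly_deg_le_power: "poly_deg_le k D \<phi> \<Longrightarrow> poly_deg_le k (D * n) (\<lambda>y. \<phi> y ^ n)"
  by (induction n) (simp_all add: poly_deg_le_const poly_deg_le_mult add.commute)

lemma poly_deg_le_mono_comp_affine:
  "poly_deg_le k (\<Sum>i<n. e i) (\<lambda>y. mono n e (affine n k A b y))"
proof -
  have "poly_deg_le k 1 (\<lambda>y. affine n k A b y i)" if "i < n" for i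
    using that poly_deg_le_add[OF poly_deg_le_sum[of "{..<k}" k 1 "\<lambda>j y. A i j * y j"]
        poly_deg_le_const]
    by (simp add: affine_def poly_deg_le_mult[OF poly_deg_le_const poly_deg_le_var, simplified])
  then have "poly_deg_le k (\<Sum>i<n. 1 * e i) (\<lambda>y. \<Prod>i<n. affine n k A b y i ^ e i)"
    by (intro poly_deg_le_prod poly_deg_le_power) auto
  then show ?thesis unfolding mono_def by simp
qed

lemma sum_vecs_eq_0_if_poly_deg_le:
  fixes \<phi> :: "(nat \<Rightarrow> 'a::{field,finite}) \<Rightarrow> 'a"
  assumes "poly_deg_le k D \<phi>" "D < (CARD('a) - 1) * k"
  shows "(\<Sum>y\<in>vecs k. \<phi> y) = 0"
proof -
  obtain ts where ts: "\<forall>(c, e)\<in>set ts. (\<Sum>j<k. e j) \<le> D" "\<forall>y. \<phi> y = eval_terms k ts y"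
    using assms(1) unfolding poly_deg_le_def by blast
  have "(\<Sum>y\<in>vecs k. mono k e y) = (0::'a)" if "(\<Sum>j<k. e j) \<le> D" for e
  proof -
    have "\<not> (\<forall>j<k. 0 < e j \<and> (CARD('a) - 1) dvd e j)"
    proof
      assume "\<forall>j<k. 0 < e j \<and> (CARD('a) - 1) dvd e j"
      then have "(\<Sum>j<k. CARD('a) - 1) \<le> (\<Sum>j<k. e j)"
        by (intro sum_mono) (auto dest: dvd_imp_le)
      then show False using that assms(2) by (simp add: mult.commute)
    qed
    then show ?thesis unfolding sum_vecs_mono by (rule if_not_P)
  qed
  then have "(\<Sum>y\<in>vecs k. eval_terms k ts' y) = 0" if "set ts' \<subseteq> set ts" for ts'
    using that ts(1) by (induction ts') (auto simp: eval_terms_def sum.distrib simp flip: sum_distrib_left)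
  then show ?thesis using ts(2) by simp
qed

lemma poly_deg_le_coeffs_sum:
  fixes f :: "(nat \<Rightarrow> 'a::{field,finite}) \<Rightarrow> 'a"
  assumes "\<And>e. poly_deg_le k (\<Sum>i<n. e i) (g e)"
  shows "poly_deg_le k (deg n f) (\<lambda>y. \<Sum>e\<in>exps TYPE('a) n. coeffs n f e * g e y)"
proof (intro poly_deg_le_sum, simp)
  fix e assume e: "e \<in> exps TYPE('a) n"
  show "poly_deg_le k (deg n f) (\<lambda>y. coeffs n f e * g e y)"
  proof (cases "coeffs n f e = 0")
    case False
    then show ?thesis
      using degree_le_deg[OF e] by (intro poly_deg_le_scale poly_deg_le_mono[OF assms])
  qed (simp add: poly_deg_le_const)
qed

lemma annihilated_if_deg_le:
  fixes f h :: "(nat \<Rightarrow> 'a::{field,finite}) \<Rightarrow> 'a"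
  assumes "deg n f \<le> d" "d + deg k h < (CARD('a) - 1) * k"
  shows "annihilated n k h f"
  unfolding annihilated_def
proof
  fix T :: "(nat \<Rightarrow> 'a) \<Rightarrow> nat \<Rightarrow> 'a"
  assume "T \<in> affine_maps n k"
  then obtain A b where T: "T = affine n k A b" unfolding affine_maps_def by blast
  define F where "F y = (\<Sum>e\<in>exps TYPE('a) n. coeffs n f e * mono n e (T y))" for y
  define H where "H y = (\<Sum>e\<in>exps TYPE('a) k. coeffs k h e * mono k e y)" for y
  have "poly_deg_le k (deg n f) F" "poly_deg_le k (deg k h) H"
    unfolding F_def H_def T
    by (intro poly_deg_le_coeffs_sum poly_deg_le_mono_comp_affine poly_deg_le_mono_fun)+
  then have "poly_deg_le k (deg n f + deg k h) (\<lambda>y. F y * H y)"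
    by (rule poly_deg_le_mult)
  then have "(\<Sum>y\<in>vecs k. F y * H y) = 0"
    by (rule sum_vecs_eq_0_if_poly_deg_le) (use assms in linarith)
  moreover have "inner k (f \<circ> T) h = (\<Sum>y\<in>vecs k. F y * H y)"
    unfolding inner_def F_def H_def by (intro sum.cong) (simp_all add: coeffs_repr[symmetric] T)
  ultimately show "inner k (f \<circ> T) h = 0" by simp
qed

section \<open>Descent to a staircase monomial\<close>

lemma annihilated_mono_extend:
  fixes h :: "(nat \<Rightarrow> 'a::{field,finite}) \<Rightarrow> 'a"
  assumes "annihilated n k h (mono n e)" "e \<in> exps TYPE('a) n" "n \<le> m"
  shows "annihilated m k h (mono m e)"
proof -
  have extended: "annihilated m k h (\<lambda>z. mono n e (affine n m (\<lambda>r c. if r = c then 1 else 0) (\<lambda>_. 0) z))"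
    using assms(1) by (rule annihilated_comp_affine)
  have "mono n e (affine n m (\<lambda>r c. if r = c then 1 else 0) (\<lambda>_. 0) z) = mono m e z" for z
  proof -
    have "mono n e (affine n m (\<lambda>r c. if r = c then 1 else 0) (\<lambda>_. 0) z) = mono n e z"
      using assms(3) by (intro mono_cong) (simp add: affine_def sum_delta_mult)
    also have "\<dots> = mono m e z"
      using assms(2,3) prod_lessThan_add_split[where n=n and t="m - n" and g="\<lambda>i. z i ^ e i"]
      by (simp add: mono_def exps_def)
    finally show ?thesis .
  qed
  with extended show ?thesis by (rule annihilated_cong)
qed

lemma sum_fun_upd_transfer:
  fixes c :: "'i \<Rightarrow> nat"
  assumes "finite A" "j \<in> A" "j \<noteq> i" "u \<le> c j"
  shows "(\<Sum>t\<in>A. (c(j := c j - u, i := c i + u)) t) + u = (\<Sum>t\<in>A. c t) + (if i \<in> A then u else 0)"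
proof -
  have "(\<Sum>t\<in>A. (c(j := c j - u, i := c i + u)) t + (if t = j then u else 0))
      = (\<Sum>t\<in>A. c t + (if t = i then u else 0))"
    using assms by (intro sum.cong) auto
  then show ?thesis using assms by (simp add: sum.distrib)
qed

definition stair :: "nat \<Rightarrow> nat \<Rightarrow> nat \<Rightarrow> nat \<Rightarrow> nat" where
  "stair X i v t = (if t < i then X else if t = i then v else 0)"

lemma sum_stair:
  assumes "i < K"
  shows "(\<Sum>t<K. stair X i v t) = i * X + v"
proof -
  have "(\<Sum>t<K. stair X i v t) = (\<Sum>t<K. (if t < i then X else 0) + (if t = i then v else 0))"
    by (intro sum.cong) (auto simp: stair_def)
  also have "\<dots> = (\<Sum>t<K. if t < i then X else 0) + v"
    using assms by (simp add: sum.distrib)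
  also have "(\<Sum>t<K. if t < i then X else 0) = (\<Sum>t<i. X)"
    using assms by (intro sum.mono_neutral_cong_right) auto
  finally show ?thesis by simp
qed

text \<open>The descent works in \<open>n + s + 1\<close> variables, with \<open>Q = q/p\<close>. In \<open>stair_state c i v\<close> the
  first \<open>n\<close> exponents of \<open>c\<close> are the sources, and the last \<open>s + 1\<close> form the staircase
  \<open>(q - Q, \<dots>, q - Q, v, 0, \<dots>, 0)\<close> with \<open>v\<close> in position \<open>i\<close>; these are filled from left to right,
  each up to \<open>q - Q\<close> and the last one into the window \<open>[r, r + Q)\<close>.\<close>
context
  fixes h :: "(nat \<Rightarrow> 'a::{field,finite}) \<Rightarrow> 'a" and p Q l n s r k :: nat
  assumes prime_p: "prime p" and CHAR_eq: "CHAR('a) = p"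
    and card_eq: "CARD('a) = p * Q" and Q_eq: "Q = p ^ l" and r_less: "r < CARD('a) - Q"
begin

definition stair_state :: "(nat \<Rightarrow> nat) \<Rightarrow> nat \<Rightarrow> nat \<Rightarrow> bool" where
  "stair_state c i v \<longleftrightarrow> annihilated (n + Suc s) k h (mono (n + Suc s) c) \<and> i \<le> s
     \<and> (\<forall>j<n. c j \<le> CARD('a) - 1) \<and> (\<forall>t\<le>s. c (n + t) = stair (CARD('a) - Q) i v t)
     \<and> v \<le> CARD('a) - 1 \<and> (i = s \<longrightarrow> v < r + Q) \<and> s * (CARD('a) - Q) + r \<le> (\<Sum>j<n + Suc s. c j)"

lemma p_gt_1: "1 < p"
  using prime_p prime_gt_1_nat by blast

lemma Q_bounds: "0 < Q" "Q < CARD('a)"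
  using p_gt_1 card_eq Q_eq by auto

lemma stair_state_move:
  assumes "stair_state c i v" "j < n" "digits_le p u (c j)" "v + u \<le> CARD('a) - 1"
    and "i = s \<longrightarrow> v + u < r + Q"
  shows "stair_state (c(j := c j - u, n + i := c (n + i) + u)) i (v + u)"
    and "(\<Sum>t<n. (c(j := c j - u, n + i := c (n + i) + u)) t) + u = (\<Sum>t<n. c t)"
proof -
  let ?c = "c(j := c j - u, n + i := c (n + i) + u)"
  have u: "u \<le> c j" using digits_le_imp_le[OF p_gt_1 assms(3)] .
  have i: "i \<le> s" "c (n + i) = v" using assms(1) unfolding stair_state_def by (auto simp: stair_def)
  have "annihilated (n + Suc s) k h (mono (n + Suc s) ?c)"
    using assms(1-3) i u prime_p CHAR_eq
    by (intro annihilated_mono_transfer) (auto simp: stair_state_def)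
  moreover have "(\<Sum>t<n + Suc s. ?c t) = (\<Sum>t<n + Suc s. c t)"
    using sum_fun_upd_transfer[of "{..<n + Suc s}" j "n + i" u c] assms(2) i u by simp
  ultimately show "stair_state ?c i (v + u)"
    using assms i unfolding stair_state_def by (auto simp: stair_def)
  show "(\<Sum>t<n. ?c t) + u = (\<Sum>t<n. c t)"
    using sum_fun_upd_transfer[of "{..<n}" j "n + i" u c] assms(2) u by simp
qed

lemma stair_state_carry:
  assumes "stair_state c i v" "i < s" "CARD('a) - Q \<le> v"
  defines "L \<equiv> v - (CARD('a) - Q)"
  shows "stair_state (c(n + i := c (n + i) - L, n + Suc i := c (n + Suc i) + L)) (Suc i) L"
proof -
  let ?c = "c(n + i := c (n + i) - L, n + Suc i := c (n + Suc i) + L)"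
  have targets: "\<forall>t\<le>s. c (n + t) = stair (CARD('a) - Q) i v t"
    using assms(1) unfolding stair_state_def by blast
  have state: "c (n + i) = v" "c (n + Suc i) = 0" "v \<le> CARD('a) - 1"
    using targets[rule_format, of i] targets[rule_format, of "Suc i"] assms(1,2)
    unfolding stair_state_def by (simp_all add: stair_def)
  have L: "L < Q" using state(3) assms(3) Q_bounds unfolding L_def by linarith
  moreover have "v = (p - 1) * p ^ l + L"
    using assms(3) card_eq Q_eq unfolding L_def by (simp add: diff_mult_distrib)
  ultimately have "digits_le p L (c (n + i))"
    using digits_le_low_part[OF p_gt_1] state(1) Q_eq by simp
  then have "annihilated (n + Suc s) k h (mono (n + Suc s) ?c)"
    using assms state prime_p CHAR_eq
    by (intro annihilated_mono_transfer) (auto simp: stair_state_def)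
  moreover have "(\<Sum>t<n + Suc s. ?c t) = (\<Sum>t<n + Suc s. c t)"
    using sum_fun_upd_transfer[of "{..<n + Suc s}" "n + i" "n + Suc i" L c] assms(2) state(1)
    unfolding L_def by simp
  moreover have "?c (n + t) = stair (CARD('a) - Q) (Suc i) L t" if "t \<le> s" for t
    using targets[rule_format, OF that] state(1,2) assms(3) unfolding L_def
    by (cases "t = Suc i") (auto simp: stair_def)
  ultimately show ?thesis
    using assms(1,2) L Q_bounds unfolding stair_state_def by auto
qed

lemma stair_state_has_source:
  assumes "stair_state c i v" "v < (if i < s then CARD('a) - Q else r)"
  shows "\<exists>j<n. 0 < c j"
proof (rule ccontr)
  have total: "s * (CARD('a) - Q) + r \<le> (\<Sum>j<n + Suc s. c j)"
    using assms(1) unfolding stair_state_def by blast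
  assume "\<not> (\<exists>j<n. 0 < c j)"
  then have "(\<Sum>j<n + Suc s. c j) = (\<Sum>t<Suc s. c (n + t))"
    unfolding sum_lessThan_add_split by simp
  also have "\<dots> = (\<Sum>t<Suc s. stair (CARD('a) - Q) i v t)"
    using assms(1) unfolding stair_state_def by (intro sum.cong) auto
  also have "\<dots> = i * (CARD('a) - Q) + v"
    using assms(1) unfolding stair_state_def by (intro sum_stair) simp
  finally have "s * (CARD('a) - Q) + r \<le> i * (CARD('a) - Q) + v"
    using total by simp
  moreover have "Suc i * (CARD('a) - Q) \<le> s * (CARD('a) - Q)" if "i < s"
    using that by (intro mult_le_mono1) simp
  ultimately show False
    using assms unfolding stair_state_def by (cases "i < s") auto
qed

lemma stair_descent:
  "stair_state c i v \<Longrightarrow> \<exists>c' v'. stair_state c' s v' \<and> r \<le> v'"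
proof (induction "(\<Sum>j<n. c j) + (s - i)" arbitrary: c i v rule: less_induct)
  case less
  have "i \<le> s" "v \<le> CARD('a) - 1" using less.prems unfolding stair_state_def by auto
  have "(i = s \<and> r \<le> v) \<or> (i < s \<and> CARD('a) - Q \<le> v) \<or> v < (if i < s then CARD('a) - Q else r)"
    using \<open>i \<le> s\<close> by auto
  then consider (filled) "i = s" "r \<le> v" | (carry) "i < s" "CARD('a) - Q \<le> v"
    | (fill) "v < (if i < s then CARD('a) - Q else r)"
    by blast
  then show ?case
  proof cases
    case filled
    then show ?thesis using less.prems by blast
  next
    case carry
    let ?L = "v - (CARD('a) - Q)"
    let ?c = "c(n + i := c (n + i) - ?L, n + Suc i := c (n + Suc i) + ?L)"
    have "(\<Sum>j<n. ?c j) + (s - Suc i) < (\<Sum>j<n. c j) + (s - i)"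
      using carry by simp
    then show ?thesis using less.hyps stair_state_carry[OF less.prems carry] by blast
  next
    case fill
    obtain j where j: "j < n" "0 < c j" using stair_state_has_source[OF less.prems fill] by blast
    have "c j \<le> CARD('a) - 1" using less.prems j(1) unfolding stair_state_def by blast
    then have "c j < CARD('a)" using Q_bounds by linarith
    then have "c j < p ^ Suc l" by (simp add: card_eq Q_eq)
    then obtain u where u: "0 < u" "digits_le p u (c j)"
      "v + u < (if i < s then CARD('a) - Q else r) + p ^ l"
      using digits_le_transfer_amount[OF p_gt_1 j(2) _ fill] by blast
    have "v + u \<le> CARD('a) - 1" "i = s \<longrightarrow> v + u < r + Q"
      using u(3) r_less Q_eq Q_bounds \<open>i \<le> s\<close> by (auto split: if_splits)
    note moved = stair_state_move[OF less.prems j(1) u(2) this]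
    have "(\<Sum>t<n. (c(j := c j - u, n + i := c (n + i) + u)) t) + (s - i) < (\<Sum>t<n. c t) + (s - i)"
      using moved(2) u(1) by linarith
    then show ?thesis using less.hyps moved(1) by blast
  qed
qed

lemma inner_stair_mono_neq_0:
  assumes "s < k" "r \<le> v" "v < r + Q"
    and "deg k h + (s * (CARD('a) - Q) + r) \<le> (CARD('a) - 1) * k"
    and "contains k h (\<lambda>i. if i < s then Q - 1 else if i = s then CARD('a) - 1 - v
                             else if i < k then CARD('a) - 1 else 0)"
  shows "inner k (mono k (stair (CARD('a) - Q) s v)) h \<noteq> 0"
proof -
  have "(\<Sum>i<k. stair (CARD('a) - Q) s v i) = s * (CARD('a) - Q) + v"
    using assms(1) by (rule sum_stair)
  then have "deg k h + (\<Sum>i<k. stair (CARD('a) - Q) s v i) < (CARD('a) - 1) * Suc k"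
    using assms(3,4) Q_bounds r_less by simp
  moreover have "\<forall>i<k. stair (CARD('a) - Q) s v i \<le> CARD('a) - 1"
    using assms(3) Q_bounds r_less by (auto simp: stair_def)
  ultimately have "inner k (mono k (stair (CARD('a) - Q) s v)) h
      = (-1) ^ k * coeffs k h (\<lambda>i. if i < k then CARD('a) - 1 - stair (CARD('a) - Q) s v i else 0)"
    by (intro inner_mono_eq_coeffs)
  also have "(\<lambda>i. if i < k then CARD('a) - 1 - stair (CARD('a) - Q) s v i else 0)
      = (\<lambda>i. if i < s then Q - 1 else if i = s then CARD('a) - 1 - v else if i < k then CARD('a) - 1 else 0)"
    using assms(1) Q_bounds by (auto simp: stair_def fun_eq_iff)
  finally show ?thesis using assms(5) unfolding contains_def by simp
qed

lemma deg_le_if_annihilated: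
  assumes "annihilated n k h f" "s < k" "d + 1 = s * (CARD('a) - Q) + r"
    and "deg k h + (d + 1) \<le> (CARD('a) - 1) * k"
    and "\<forall>r'. r \<le> r' \<and> r' \<le> CARD('a) - 1 \<longrightarrow>
           contains k h (\<lambda>i. if i < s then Q - 1 else if i = s then CARD('a) - 1 - r'
                              else if i < k then CARD('a) - 1 else 0)"
  shows "deg n f \<le> d"
proof (rule ccontr)
  assume "\<not> deg n f \<le> d"
  then obtain e where e: "e \<in> exps TYPE('a) n" "coeffs n f e \<noteq> 0" "d < (\<Sum>i<n. e i)"
    using less_deg_imp_coeffs[of d n f] by auto
  have "annihilated (n + Suc s) k h (mono (n + Suc s) e)"
    using annihilated_mono_of_coeffs[OF assms(1) e(1,2)] e(1) by (rule annihilated_mono_extend) simp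
  moreover have "(\<Sum>j<n + Suc s. e j) = (\<Sum>j<n. e j)"
    using e(1) unfolding sum_lessThan_add_split by (simp add: exps_def)
  ultimately have "stair_state e 0 0"
    using e(1,3) assms(3) Q_bounds unfolding stair_state_def by (auto simp: exps_def stair_def)
  then obtain c v where "stair_state c s v" "r \<le> v"
    using stair_descent by blast
  then have "annihilated (n + Suc s) k h (mono (n + Suc s) c)" "\<forall>t\<le>s. c (n + t) = stair (CARD('a) - Q) s v t"
    "v < r + Q"
    unfolding stair_state_def by auto
  moreover have "(\<lambda>i. if i < Suc s then c (n + i) else 0) = stair (CARD('a) - Q) s v"
    using calculation(2) by (auto simp: fun_eq_iff stair_def)
  ultimately have "inner k (mono k (stair (CARD('a) - Q) s v)) h = 0"
    using inner_mono_restrict_eq_0[of n "Suc s" k h c] assms(2) by simp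
  moreover have "v \<le> CARD('a) - 1" using \<open>v < r + Q\<close> r_less by linarith
  ultimately show False
    using inner_stair_mono_neq_0[OF assms(2) \<open>r \<le> v\<close> \<open>v < r + Q\<close>] assms(3-5) \<open>r \<le> v\<close> by simp
qed

end

theorem lemma4p1:
  fixes h :: "(nat \<Rightarrow> 'a::{field,finite}) \<Rightarrow> 'a"
    and p l n d k s r :: nat
  assumes "prime p" and "CARD('a) = p ^ l"
    and "n > 0" and "d > 0" and "k > 0"
    and "d + 1 = s * (CARD('a) - CARD('a) div p) + r"
    and "r < CARD('a) - CARD('a) div p"
    and "s < k"
    and "h \<in> funs k"
    and "int (deg k h) \<le> (int CARD('a) - 1) * int k - (int d + 1)"
    and "\<forall>r'. r \<le> r' \<and> r' \<le> CARD('a) - 1 \<longrightarrow>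
           contains k h (\<lambda>i. if i < s then CARD('a) div p - 1
                              else if i = s then CARD('a) - 1 - r'
                              else if i < k then CARD('a) - 1 else 0)"
  shows "RM n d = Fam n k h"
proof -
  have "l \<noteq> 0" using card_field_ge_2[where 'a='a] assms(2) by (cases l) auto
  then have Q: "CARD('a) div p = p ^ (l - 1)"
    using assms(2) prime_gt_0_nat[OF assms(1)] by (cases l) auto
  have card: "CARD('a) = p * (CARD('a) div p)"
    using assms(2) \<open>l \<noteq> 0\<close> by (cases l) auto
  have "int (deg k h + (d + 1)) \<le> int ((CARD('a) - 1) * k)"
    using assms(10) card_field_ge_2[where 'a='a] by (simp add: of_nat_diff)
  then have deg_h: "deg k h + (d + 1) \<le> (CARD('a) - 1) * k" by linarith
  have "RM n d \<subseteq> Fam n k h"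
    using annihilated_if_deg_le[of n _ d k h] deg_h unfolding RM_def Fam_eq by auto
  moreover have "Fam n k h \<subseteq> RM n d"
  proof
    fix f assume "f \<in> Fam n k h"
    then have f: "f \<in> funs n" "annihilated n k h f" unfolding Fam_eq by auto
    have "deg n f \<le> d"
      using assms(1) CHAR_eq_prime_of_card[OF assms(1,2)] card Q assms(7) f(2) assms(8,6) deg_h assms(11)
      by (rule deg_le_if_annihilated)
    then show "f \<in> RM n d" using f(1) unfolding RM_def by simp
  qed
  ultimately show ?thesis by blast
qed

end
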